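(* Let $2\le p<\infty$. There exists a constant $c=c(p)>0$ such that for every $\xi,\eta\in\mathbb{R}^n\setminus\{0\}$, $$\langle H_{p-1}(\xi)-H_{p-1}(\eta),\xi-\eta\rangle \;\ge\; c(p)\left[\frac{(|\xi|-1)_+^{p}}{|\xi|^2}+\frac{(|\eta|-1)_+^{p}}{|\eta|^2}\right]|\xi-\eta|^2 .$$
   Context: For $\gamma>0$, $H_\gamma:\mathbb{R}^n\to\mathbb{R}^n$ is defined by $H_\gamma(\xi)=(|\xi|-1)_+^{\gamma}\,\frac{\xi}{|\xi|}$ for $\xi\neq 0$ and $H_\gamma(0)=0$, where $(s)_+=\max\{s,0\}$ and $\langle\cdot,\cdot\rangle$ is the Euclidean inner product. *)

theory Defs
  imports "HOL-Analysis.Analysis"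
begin

definition pos_part :: "real \<Rightarrow> real" where
  "pos_part s = max s 0"

text \<open>Vectors in R^n are represented as functions nat => real; only the
  coordinates i < n matter. Euclidean inner product and norm on R^n.\<close>
definition ip :: "nat \<Rightarrow> (nat \<Rightarrow> real) \<Rightarrow> (nat \<Rightarrow> real) \<Rightarrow> real" where
  "ip n x y = (\<Sum>i<n. x i * y i)"

definition enorm :: "nat \<Rightarrow> (nat \<Rightarrow> real) \<Rightarrow> real" where
  "enorm n x = sqrt (ip n x x)"

definition is_zero :: "nat \<Rightarrow> (nat \<Rightarrow> real) \<Rightarrow> bool" where
  "is_zero n x \<longleftrightarrow> (\<forall>i<n. x i = 0)"

text \<open>H_gamma(xi) = (|xi|-1)_+^gamma xi/|xi| for xi nonzero, H_gamma(0) = 0.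
  Real exponent via powr; for gamma > 0 we have 0 powr gamma = 0 as intended.\<close>
definition H :: "nat \<Rightarrow> real \<Rightarrow> (nat \<Rightarrow> real) \<Rightarrow> (nat \<Rightarrow> real)" where
  "H n \<gamma> \<xi> = (if is_zero n \<xi> then (\<lambda>_. 0)
     else (\<lambda>i. (pos_part (enorm n \<xi> - 1)) powr \<gamma> / enorm n \<xi> * \<xi> i))"

end

theory Submission
  imports Defs
begin

text \<open>\<open>H\<^sub>\<gamma>(\<xi>) = f(|\<xi>|) \<xi>\<close> with the radial factor \<open>f(s) = (s - 1)\<^sub>+ ^ \<gamma> / s\<close>, which is
  nondecreasing when \<open>\<gamma> = p - 1 \<ge> 1\<close>. The polarisation identity
  \<open>\<langle>\<alpha>\<xi> - \<beta>\<eta>, \<xi> - \<eta>\<rangle> = (\<alpha> + \<beta>)/2 |\<xi> - \<eta>|\<^sup>2 + (\<alpha> - \<beta>)(|\<xi>|\<^sup>2 - |\<eta>|\<^sup>2)/2\<close>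
  with \<open>\<alpha> = f(|\<xi>|)\<close>, \<open>\<beta> = f(|\<eta>|)\<close> has a nonnegative second term by monotonicity,
  and \<open>(s - 1)\<^sub>+ ^ p / s\<^sup>2 = f(s) (s - 1)/s \<le> f(s)\<close>. Hence \<open>c(p) = 1/2\<close> works.\<close>

lemma ip_self_nonneg: "0 \<le> ip n x x"
  unfolding ip_def by (intro sum_nonneg) auto

lemma ip_self_pos:
  assumes "\<not> is_zero n x"
  shows "0 < ip n x x"
proof -
  obtain j where j: "j < n" "x j \<noteq> 0"
    using assms unfolding is_zero_def by auto
  have "0 < x j * x j"
    using j(2) by (metis not_real_square_gt_zero)
  also have "\<dots> \<le> (\<Sum>i<n. x i * x i)"
    by (rule member_le_sum) (use j in auto)
  finally show ?thesis
    unfolding ip_def .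
qed

lemma enorm_squared: "(enorm n x)\<^sup>2 = ip n x x"
  unfolding enorm_def using ip_self_nonneg by simp

lemma enorm_pos: "\<not> is_zero n x \<Longrightarrow> 0 < enorm n x"
  unfolding enorm_def using ip_self_pos by simp

lemma ip_scaled_diff_diff:
  "ip n (\<lambda>i. \<alpha> * x i - \<beta> * y i) (\<lambda>i. x i - y i)
     = (\<alpha> + \<beta>) / 2 * (enorm n (\<lambda>i. x i - y i))\<^sup>2
       + (\<alpha> - \<beta>) / 2 * (ip n x x - ip n y y)"
  unfolding enorm_squared ip_def
  by (simp add: field_simps sum.distrib sum_subtractf sum_distrib_left)

lemma ip_scaled_diff_diff_ge:
  assumes "0 \<le> (\<alpha> - \<beta>) * (ip n x x - ip n y y)"
  shows "(\<alpha> + \<beta>) / 2 * (enorm n (\<lambda>i. x i - y i))\<^sup>2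
           \<le> ip n (\<lambda>i. \<alpha> * x i - \<beta> * y i) (\<lambda>i. x i - y i)"
  unfolding ip_scaled_diff_diff using assms by simp

lemma mono_on_diff_mult_sq_diff_nonneg:
  fixes f :: "real \<Rightarrow> real"
  assumes "mono_on {0<..} f" "0 < a" "0 < b"
  shows "0 \<le> (f a - f b) * (a\<^sup>2 - b\<^sup>2)"
proof (cases "a \<le> b")
  case True
  then have "f a \<le> f b" "a\<^sup>2 \<le> b\<^sup>2"
    using assms by (auto intro: mono_onD power_mono)
  then show ?thesis
    by (simp add: mult_nonpos_nonpos)
next
  case False
  then have "f b \<le> f a" "b\<^sup>2 \<le> a\<^sup>2"
    using assms by (auto intro: mono_onD power_mono)
  then show ?thesis
    by simp
qed

definition radial_factor :: "real \<Rightarrow> real \<Rightarrow> real" where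
  "radial_factor \<gamma> s = pos_part (s - 1) powr \<gamma> / s"

lemma H_eq_radial_factor:
  "\<not> is_zero n \<xi> \<Longrightarrow> H n \<gamma> \<xi> = (\<lambda>i. radial_factor \<gamma> (enorm n \<xi>) * \<xi> i)"
  unfolding H_def radial_factor_def by simp

lemma radial_factor_nonneg: "0 \<le> s \<Longrightarrow> 0 \<le> radial_factor \<gamma> s"
  unfolding radial_factor_def by simp

lemma radial_factor_eq_0: "s \<le> 1 \<Longrightarrow> radial_factor \<gamma> s = 0"
  unfolding radial_factor_def pos_part_def by simp

lemma radial_factor_gt_1:
  assumes "1 < s"
  shows "radial_factor \<gamma> s = (s - 1) powr (\<gamma> - 1) * ((s - 1) / s)"
proof -
  have "(s - 1) powr \<gamma> = (s - 1) powr (\<gamma> - 1) * (s - 1)"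
    using assms powr_add[of "s - 1" "\<gamma> - 1" 1] by simp
  then show ?thesis
    using assms unfolding radial_factor_def pos_part_def by simp
qed

lemma radial_factor_mono:
  assumes "1 \<le> \<gamma>"
  shows "mono_on {0<..} (radial_factor \<gamma>)"
proof (rule mono_onI)
  fix a b :: real
  assume "a \<in> {0<..}" "a \<le> b"
  show "radial_factor \<gamma> a \<le> radial_factor \<gamma> b"
  proof (cases "a \<le> 1")
    case True
    then show ?thesis
      using \<open>a \<in> {0<..}\<close> \<open>a \<le> b\<close> by (simp add: radial_factor_eq_0 radial_factor_nonneg)
  next
    case False
    have "(a - 1) powr (\<gamma> - 1) \<le> (b - 1) powr (\<gamma> - 1)"
      using False \<open>a \<le> b\<close> assms by (intro powr_mono2) auto
    moreover have "(a - 1) / a \<le> (b - 1) / b"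
      using False \<open>a \<le> b\<close> by (simp add: divide_simps algebra_simps)
    moreover have "1 < a" "1 < b"
      using False \<open>a \<le> b\<close> by auto
    ultimately show ?thesis
      unfolding radial_factor_gt_1[OF \<open>1 < a\<close>] radial_factor_gt_1[OF \<open>1 < b\<close>]
      by (intro mult_mono) auto
  qed
qed

lemma pos_part_powr_div_sq_le_radial_factor:
  assumes "0 < s"
  shows "pos_part (s - 1) powr (\<gamma> + 1) / s\<^sup>2 \<le> radial_factor \<gamma> s"
proof (cases "s \<le> 1")
  case True
  then show ?thesis
    using assms by (simp add: pos_part_def radial_factor_nonneg)
next
  case False
  then have "pos_part (s - 1) powr (\<gamma> + 1) / s\<^sup>2 = radial_factor \<gamma> s * ((s - 1) / s)"
    by (simp add: pos_part_def radial_factor_def powr_add power2_eq_square)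
  also have "\<dots> \<le> radial_factor \<gamma> s"
    using False by (intro mult_left_le radial_factor_nonneg) auto
  finally show ?thesis .
qed

theorem lemma2p4:
  fixes p :: real
  assumes "2 \<le> p"
  shows "\<exists>c>0. \<forall>(n::nat) (\<xi>::nat \<Rightarrow> real) (\<eta>::nat \<Rightarrow> real).
    \<not> is_zero n \<xi> \<longrightarrow> \<not> is_zero n \<eta> \<longrightarrow>
    ip n (\<lambda>i. H n (p - 1) \<xi> i - H n (p - 1) \<eta> i) (\<lambda>i. \<xi> i - \<eta> i) \<ge>
      c * ((pos_part (enorm n \<xi> - 1)) powr p / (enorm n \<xi>)\<^sup>2
         + (pos_part (enorm n \<eta> - 1)) powr p / (enorm n \<eta>)\<^sup>2)
        * (enorm n (\<lambda>i. \<xi> i - \<eta> i))\<^sup>2"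
proof (intro exI[of _ "1/2"] conjI allI impI)
  fix n and \<xi> \<eta> :: "nat \<Rightarrow> real"
  assume \<xi>: "\<not> is_zero n \<xi>" and \<eta>: "\<not> is_zero n \<eta>"
  define f where "f = radial_factor (p - 1)"
  let ?g = "\<lambda>s. pos_part (s - 1) powr p / s\<^sup>2"
  let ?d = "(enorm n (\<lambda>i. \<xi> i - \<eta> i))\<^sup>2"
  have "0 \<le> (f (enorm n \<xi>) - f (enorm n \<eta>)) * (ip n \<xi> \<xi> - ip n \<eta> \<eta>)"
    using mono_on_diff_mult_sq_diff_nonneg[OF radial_factor_mono enorm_pos[OF \<xi>] enorm_pos[OF \<eta>]]
      assms by (simp add: f_def enorm_squared)
  then have "(f (enorm n \<xi>) + f (enorm n \<eta>)) / 2 * ?d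
      \<le> ip n (\<lambda>i. H n (p - 1) \<xi> i - H n (p - 1) \<eta> i) (\<lambda>i. \<xi> i - \<eta> i)"
    unfolding H_eq_radial_factor[OF \<xi>] H_eq_radial_factor[OF \<eta>] f_def
    by (rule ip_scaled_diff_diff_ge)
  moreover have g_le_f: "?g (enorm n \<xi>) \<le> f (enorm n \<xi>)" "?g (enorm n \<eta>) \<le> f (enorm n \<eta>)"
    using pos_part_powr_div_sq_le_radial_factor[of _ "p - 1"] enorm_pos \<xi> \<eta>
    by (auto simp: f_def)
  then have "1/2 * (?g (enorm n \<xi>) + ?g (enorm n \<eta>)) * ?d
      \<le> (f (enorm n \<xi>) + f (enorm n \<eta>)) / 2 * ?d"
    by (intro mult_right_mono zero_le_power2) (use add_mono[OF g_le_f] in argo)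
  ultimately show "1/2 * (?g (enorm n \<xi>) + ?g (enorm n \<eta>)) * ?d
      \<le> ip n (\<lambda>i. H n (p - 1) \<xi> i - H n (p - 1) \<eta> i) (\<lambda>i. \<xi> i - \<eta> i)"
    by linarith
qed simp

end
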